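(* Let $A(x)=-(x-\frac13)^2$ on $[0,1]$, with the two maps $\tau_1(x)=x/2$ and $\tau_2(x)=(x+1)/2$ (the inverse branches of $T(x)=2x \pmod 1$). Let $V_1(x)=\frac{10}{63}-\frac{2x}{21}-\frac{x^2}{3}$, $V_2(x)=\frac{5}{63}+\frac{2x}{7}-\frac{x^2}{3}$, $V_3(x)=\frac{10x}{21}-\frac{x^2}{3}$, $V_4(x)=-\frac{5}{63}+\frac{4x}{7}-\frac{x^2}{3}$, and $V(x)=\max\{V_1(x),V_2(x),V_3(x),V_4(x)\}$. Then $m(A)=-\frac{2}{63}$ and $V$ is a calibrated subaction for $A$, i.e. for every $x\in[0,1]$, $$V(x)=\max\{A(\tau_1(x))+V(\tau_1(x)),\,A(\tau_2(x))+V(\tau_2(x))\}-m(A).$$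
   Context: $m(A)$ denotes the supremum of $\int A\,d\rho$ over probabilities $\rho$ invariant for $T(x)=2x\pmod 1$. A calibrated subaction (in this non-periodic setting on $[0,1]$) is a continuous $V:[0,1]\to\mathbb{R}$ with $V(x)=\max_{i\in\{1,2\}}[A(\tau_i(x))+V(\tau_i(x))]-m(A)$ for all $x\in[0,1]$. *)

theory Defs
  imports "HOL-Probability.Probability"
begin

definition doubling :: "real \<Rightarrow> real" where
  "doubling x = 2 * x - of_int \<lfloor>2 * x\<rfloor>"

definition tau1 :: "real \<Rightarrow> real" where "tau1 x = x / 2"
definition tau2 :: "real \<Rightarrow> real" where "tau2 x = (x + 1) / 2"

definition invariant_prob :: "real measure \<Rightarrow> bool" where
  "invariant_prob M \<longleftrightarrow> prob_space M \<and>
     sets M = sets (restrict_space borel {0..1}) \<and>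
     doubling \<in> measurable M M \<and>
     (\<forall>B \<in> sets M. emeasure M (doubling -` B \<inter> space M) = emeasure M B)"

definition max_erg :: "(real \<Rightarrow> real) \<Rightarrow> real" where
  "max_erg A = Sup {integral\<^sup>L M A | M. invariant_prob M}"

definition calibrated_subaction :: "(real \<Rightarrow> real) \<Rightarrow> (real \<Rightarrow> real) \<Rightarrow> bool" where
  "calibrated_subaction A V \<longleftrightarrow> continuous_on {0..1} V \<and>
     (\<forall>x \<in> {0..1}. V x = max (A (tau1 x) + V (tau1 x)) (A (tau2 x) + V (tau2 x)) - max_erg A)"

end

theory Submission
  imports Defs
begin

text \<open>
  Cancelling the quadratic parts, the calibration equation for V with constant 2/63 becomes an
  identity between piecewise linear functions, checked by case analysis. Since every
  y \<in> [0,1) is tau1 or tau2 of doubling y, calibration gives A + V - V \<circ> doubling \<le> -2/63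
  on [0,1]; integrating against an invariant measure, under which V and V \<circ> doubling have the
  same integral, yields m(A) \<le> -2/63. Equality is attained by the uniform measure on the
  periodic orbit 1/7 \<mapsto> 2/7 \<mapsto> 4/7.
\<close>

lemma integrable_continuous_on_compact:
  fixes f :: "'a::topological_space \<Rightarrow> 'b::{banach, second_countable_topology}"
  assumes "finite_measure M" "sets M = sets (restrict_space borel K)"
    and "compact K" "continuous_on K f"
  shows "integrable M f"
proof -
  interpret finite_measure M by fact
  have space: "space M = K"
    using sets_eq_imp_space_eq[OF assms(2)] by (simp add: space_restrict_space)
  obtain B where B: "\<And>x. x \<in> K \<Longrightarrow> norm (f x) \<le> B"
    using compact_imp_bounded[OF compact_continuous_image[OF assms(4,3)]]
    by (auto simp: bounded_iff)
  have "f \<in> borel_measurable M"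
    using borel_measurable_continuous_on_restrict[OF assms(4)]
    by (simp add: measurable_cong_sets[OF assms(2) refl])
  then show ?thesis
    using B by (intro integrable_const_bound[where B = B] AE_I2) (auto simp: space)
qed

lemma borel_measurable_doubling [measurable]: "doubling \<in> borel_measurable borel"
  unfolding doubling_def by measurable

lemma doubling_range: "doubling x \<in> {0..<1}"
  unfolding doubling_def by (simp add: floor_le_iff) linarith

lemma doubling_inverse_branches:
  assumes "y \<in> {0..<1}"
  shows "tau1 (doubling y) = y \<or> tau2 (doubling y) = y"
proof (cases "y < 1/2")
  case True
  with assms have "\<lfloor>2 * y\<rfloor> = 0" by (simp add: floor_eq_iff)
  then show ?thesis by (simp add: doubling_def tau1_def)
next
  case False
  with assms have "\<lfloor>2 * y\<rfloor> = 1" by (simp add: floor_eq_iff)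
  then show ?thesis by (simp add: doubling_def tau2_def)
qed

lemma calibrated_imp_coboundary_bound:
  fixes A V :: "real \<Rightarrow> real"
  assumes "\<And>x. x \<in> {0..1} \<Longrightarrow> V x = max (A (tau1 x) + V (tau1 x)) (A (tau2 x) + V (tau2 x)) - c"
    and "y \<in> {0..<1}"
  shows "A y + V y - V (doubling y) \<le> c"
proof -
  have "A (tau1 (doubling y)) + V (tau1 (doubling y)) \<le> V (doubling y) + c"
    and "A (tau2 (doubling y)) + V (tau2 (doubling y)) \<le> V (doubling y) + c"
    using assms(1)[of "doubling y"] doubling_range[of y] by auto
  then show ?thesis
    using doubling_inverse_branches[OF assms(2)] by auto
qed

lemma invariant_prob_distr_doubling:
  assumes "invariant_prob M"
  shows "distr M M doubling = M"
  using assms unfolding invariant_prob_def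
  by (intro measure_eqI) (auto simp: emeasure_distr)

lemma
  fixes f :: "real \<Rightarrow> 'b::{banach, second_countable_topology}"
  assumes "invariant_prob M" "f \<in> borel_measurable M"
  shows invariant_prob_integral_doubling: "integral\<^sup>L M (\<lambda>x. f (doubling x)) = integral\<^sup>L M f"
    and invariant_prob_integrable_doubling: "integrable M (\<lambda>x. f (doubling x)) \<longleftrightarrow> integrable M f"
proof -
  have T: "doubling \<in> measurable M M"
    using assms(1) by (simp add: invariant_prob_def)
  show "integral\<^sup>L M (\<lambda>x. f (doubling x)) = integral\<^sup>L M f"
    using integral_distr[OF T assms(2)] by (simp add: invariant_prob_distr_doubling[OF assms(1)])
  show "integrable M (\<lambda>x. f (doubling x)) \<longleftrightarrow> integrable M f"
    using integrable_distr_eq[OF T assms(2)] by (simp add: invariant_prob_distr_doubling[OF assms(1)])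
qed

lemma invariant_prob_integral_le:
  fixes A V :: "real \<Rightarrow> real"
  assumes M: "invariant_prob M"
    and A: "continuous_on {0..1} A" and V: "continuous_on {0..1} V"
    and bound: "\<And>y. y \<in> {0..1} \<Longrightarrow> A y + V y - V (doubling y) \<le> c"
  shows "integral\<^sup>L M A \<le> c"
proof -
  have prob: "prob_space M" and sets: "sets M = sets (restrict_space borel {0..1::real})"
    using M by (auto simp: invariant_prob_def)
  interpret prob_space M by fact
  have space: "space M = {0..1}"
    using sets_eq_imp_space_eq[OF sets] by simp
  have int_A: "integrable M A" and int_V: "integrable M V"
    using integrable_continuous_on_compact[OF finite_measure_axioms sets] A V by auto
  have meas_V: "V \<in> borel_measurable M"
    using int_V by (rule borel_measurable_integrable)
  have int_VT: "integrable M (\<lambda>x. V (doubling x))"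
    using invariant_prob_integrable_doubling[OF M meas_V] int_V by simp
  have VT: "integral\<^sup>L M (\<lambda>x. V (doubling x)) = integral\<^sup>L M V"
    using invariant_prob_integral_doubling[OF M meas_V] .
  have "integral\<^sup>L M A = integral\<^sup>L M (\<lambda>y. A y + V y - V (doubling y))"
    using int_A int_V int_VT VT by simp
  also have "\<dots> \<le> integral\<^sup>L M (\<lambda>_. c)"
    using int_A int_V int_VT bound by (intro integral_mono) (auto simp: space)
  also have "\<dots> = c"
    by (simp add: prob_space)
  finally show ?thesis .
qed

lemma max_erg_eqI:
  assumes "\<And>M. invariant_prob M \<Longrightarrow> integral\<^sup>L M A \<le> c"
    and "invariant_prob M\<^sub>0" "integral\<^sup>L M\<^sub>0 A = c"
  shows "max_erg A = c"
  unfolding max_erg_def using assms by (intro cSup_eq_maximum) auto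

text \<open>The clamp only makes the map land in [0,1]; it is the identity on the support of p.\<close>
definition unit_pmf_measure :: "real pmf \<Rightarrow> real measure" where
  "unit_pmf_measure p =
     distr (measure_pmf p) (restrict_space borel {0..1}) (\<lambda>x. if x \<in> {0..1} then x else 0)"

lemma
  shows sets_unit_pmf_measure: "sets (unit_pmf_measure p) = sets (restrict_space borel {0..1})"
    and space_unit_pmf_measure: "space (unit_pmf_measure p) = {0..1}"
  by (simp_all add: unit_pmf_measure_def space_restrict_space)

lemma emeasure_unit_pmf_measure:
  assumes "set_pmf p \<subseteq> {0..1}" "B \<in> sets (restrict_space borel {0..1})"
  shows "emeasure (unit_pmf_measure p) B = emeasure p B"
  unfolding unit_pmf_measure_def using assms
  by (subst emeasure_distr) (auto intro!: emeasure_eq_AE simp: AE_measure_pmf_iff subset_iff)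

lemma integral_unit_pmf_measure:
  fixes f :: "real \<Rightarrow> 'b::{banach, second_countable_topology}"
  assumes "set_pmf p \<subseteq> {0..1}" "f \<in> borel_measurable (restrict_space borel {0..1})"
  shows "integral\<^sup>L (unit_pmf_measure p) f = measure_pmf.expectation p f"
proof -
  have "(\<lambda>x. if x \<in> {0..1} then x else 0) \<in> measurable p (restrict_space borel {0..1::real})"
    by auto
  from integral_distr[OF this assms(2)] show ?thesis
    unfolding unit_pmf_measure_def using assms(1)
    by (auto intro!: integral_cong_AE simp: AE_measure_pmf_iff subset_iff)
qed

lemma invariant_prob_unit_pmf_measure:
  assumes support: "set_pmf p \<subseteq> {0..1}" and invariant: "map_pmf doubling p = p"
  shows "invariant_prob (unit_pmf_measure p)"
proof -
  let ?M = "unit_pmf_measure p"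
  have "doubling \<in> measurable (restrict_space borel {0..1}) (restrict_space borel {0..1})"
    using doubling_range
    by (intro measurable_restrict_space3) (auto simp: doubling_def less_imp_le)
  then have measurable: "doubling \<in> measurable ?M ?M"
    by (simp add: measurable_cong_sets[OF sets_unit_pmf_measure sets_unit_pmf_measure])
  have "emeasure ?M (doubling -` B \<inter> space ?M) = emeasure ?M B" if B: "B \<in> sets ?M" for B
  proof -
    have "emeasure ?M (doubling -` B \<inter> space ?M) = emeasure p (doubling -` B \<inter> {0..1})"
      using measurable_sets[OF measurable B] support
      by (simp add: emeasure_unit_pmf_measure sets_unit_pmf_measure space_unit_pmf_measure)
    also have "\<dots> = emeasure (map_pmf doubling p) B"
      using support by (auto intro!: emeasure_eq_AE simp: AE_measure_pmf_iff subset_iff)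
    also have "\<dots> = emeasure ?M B"
      using B support by (simp add: invariant emeasure_unit_pmf_measure sets_unit_pmf_measure)
    finally show ?thesis .
  qed
  moreover have "prob_space ?M"
    unfolding unit_pmf_measure_def
    by (intro prob_space.prob_space_distr prob_space_measure_pmf) auto
  ultimately show ?thesis
    using measurable by (simp add: invariant_prob_def sets_unit_pmf_measure)
qed

lemma map_pmf_of_set_doubling:
  assumes "finite S" "S \<noteq> {}" "doubling ` S = S"
  shows "map_pmf doubling (pmf_of_set S) = pmf_of_set S"
  using assms finite_surj_inj[of S doubling] by (simp add: map_pmf_of_set_inj)

definition A_ex :: "real \<Rightarrow> real" where
  "A_ex x = - ((x - 1/3) ^ 2)"

definition V_ex :: "real \<Rightarrow> real" where
  "V_ex x = max (max (10/63 - 2*x/21 - x ^ 2/3) (5/63 + 2*x/7 - x ^ 2/3))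
                (max (10*x/21 - x ^ 2/3) (-5/63 + 4*x/7 - x ^ 2/3))"

definition V_ex_linear :: "real \<Rightarrow> real" where
  "V_ex_linear x = max (max (10/63 - 2*x/21) (5/63 + 2*x/7)) (max (10*x/21) (-5/63 + 4*x/7))"

lemma V_ex_eq: "V_ex x = V_ex_linear x - x ^ 2 / 3"
  unfolding V_ex_def V_ex_linear_def by (simp add: max_def)

lemma V_ex_linear_calibrated:
  assumes "x \<in> {0..1}"
  shows "V_ex_linear x = max (x/3 - 1/9 + V_ex_linear (x/2)) (-x/3 - 1/9 + V_ex_linear ((x+1)/2)) + 2/63"
  using assms unfolding V_ex_linear_def by (simp add: max_def field_simps)

lemma V_ex_calibrated:
  assumes "x \<in> {0..1}"
  shows "V_ex x = max (A_ex (tau1 x) + V_ex (tau1 x)) (A_ex (tau2 x) + V_ex (tau2 x)) + 2/63"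
proof -
  \<comment> \<open>A(tau_i x) + V(tau_i x) and V x have the same quadratic part -x^2/3\<close>
  have "A_ex (tau1 x) + V_ex (tau1 x) = x/3 - 1/9 + V_ex_linear (x/2) - x^2/3"
    and "A_ex (tau2 x) + V_ex (tau2 x) = -x/3 - 1/9 + V_ex_linear ((x+1)/2) - x^2/3"
    unfolding A_ex_def V_ex_eq tau1_def tau2_def by (simp_all add: power2_eq_square field_simps)
  then show ?thesis
    using V_ex_linear_calibrated[OF assms] by (simp add: V_ex_eq max_diff_distrib_left)
qed

lemma continuous_on_A_ex: "continuous_on S A_ex"
  unfolding A_ex_def by (intro continuous_intros)

lemma continuous_on_V_ex: "continuous_on S V_ex"
  unfolding V_ex_def by (intro continuous_intros) auto

lemma integral_A_ex_le:
  assumes "invariant_prob M"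
  shows "integral\<^sup>L M A_ex \<le> -2/63"
proof (rule invariant_prob_integral_le[OF assms continuous_on_A_ex continuous_on_V_ex])
  fix y :: real
  assume y: "y \<in> {0..1}"
  show "A_ex y + V_ex y - V_ex (doubling y) \<le> -2/63"
  proof (cases "y = 1")
    \<comment> \<open>doubling 1 = 0, but 1 is neither tau1 0 nor tau2 0\<close>
    case True
    then show ?thesis by (simp add: doubling_def A_ex_def V_ex_def power2_eq_square)
  next
    case False
    with y show ?thesis
      using V_ex_calibrated by (intro calibrated_imp_coboundary_bound) auto
  qed
qed

lemma A_ex_maximizing_orbit:
  defines "S \<equiv> {1/7, 2/7, 4/7 :: real}"
  shows "invariant_prob (unit_pmf_measure (pmf_of_set S))"
    and "integral\<^sup>L (unit_pmf_measure (pmf_of_set S)) A_ex = -2/63"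
proof -
  have S: "finite S" "S \<noteq> {}" "S \<subseteq> {0..1}" by (auto simp: S_def)
  have "doubling ` S = S"
    by (simp add: S_def doubling_def floor_eq_iff insert_commute)
  then show "invariant_prob (unit_pmf_measure (pmf_of_set S))"
    using S by (intro invariant_prob_unit_pmf_measure) (simp_all add: map_pmf_of_set_doubling)
  show "integral\<^sup>L (unit_pmf_measure (pmf_of_set S)) A_ex = -2/63"
    using S continuous_on_A_ex
    by (simp add: integral_unit_pmf_measure borel_measurable_continuous_on_restrict integral_pmf_of_set)
       (simp add: S_def A_ex_def power2_eq_square)
qed

theorem mainTheorem2:
  fixes A V :: "real \<Rightarrow> real"
  assumes "A = (\<lambda>x. - ((x - 1/3) ^ 2))"
    and "V = (\<lambda>x. max (max (10/63 - 2*x/21 - x ^ 2/3) (5/63 + 2*x/7 - x ^ 2/3))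
                      (max (10*x/21 - x ^ 2/3) (-5/63 + 4*x/7 - x ^ 2/3)))"
  shows "max_erg A = -2/63 \<and> calibrated_subaction A V"
proof -
  have A: "A = A_ex" and V: "V = V_ex"
    using assms by (simp_all add: fun_eq_iff A_ex_def V_ex_def)
  have "max_erg A_ex = -2/63"
    using integral_A_ex_le A_ex_maximizing_orbit by (rule max_erg_eqI)
  then show ?thesis
    unfolding A V calibrated_subaction_def using continuous_on_V_ex V_ex_calibrated by simp
qed

end
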